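(* Let $\alpha>-1$ and let $\Phi:[0,\tfrac14]\to\mathbb{R}$ be a bounded measurable function, continuous at $\tfrac14$, with $\Phi(\tfrac14)\neq 0$. For $\sigma_\varepsilon^2>0$ define on $[-\pi,\pi]^2$ $$f(\lambda_1,\lambda_2)=\frac{\sigma_\varepsilon^2}{4\pi^2}\int_0^{1/4}\frac{\Phi(x)\,(\tfrac14-x)^{\alpha}}{\bigl(1-2x(\cos\lambda_1+\cos\lambda_2)\bigr)^2}\,dx .$$ Then: (i) if $\alpha>1$, $f$ is finite and continuous at every point of $[-\pi,\pi]^2$; (ii) if $-1<\alpha\le 1$, $f$ is continuous at every $(\lambda_1,\lambda_2)\neq(0,0)$ in $[-\pi,\pi]^2$ and $f(\lambda_1,\lambda_2)\to+\infty$ as $(\lambda_1,\lambda_2)\to(0,0)$. Moreover, as $(\lambda_1,\lambda_2)\to(0,0)$: - if $-1<\alpha<1$, $f(\lambda_1,\lambda_2)\sim c_\alpha(\lambda_1^2+\lambda_2^2)^{\alpha-1}$ with $c_\alpha=\frac{\sigma_\varepsilon^2}{4\pi^2}16^{-\alpha}\Phi(\tfrac14)\int_0^{\infty}\frac{u^\alpha}{(1+u)^2}\,du$; - if $\alpha=1$ and in addition $\Phi$ is $\beta$-Hölder on $[0,\tfrac14]$ for some $\beta>0$ (i.e. $|\Phi(x)-\Phi(y)|\le C|x-y|^\beta$ for some $C>0$ and all $x,y\in[0,\tfrac14]$), then $f(\lambda_1,\lambda_2)\sim c_1\,\bigl|\ln(\lambda_1^2+\lambda_2^2)\bigr|$ with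 $c_1=\frac{\sigma_\varepsilon^2}{4\pi^2}16^{-1}\Phi(\tfrac14)$.
   Context: Here $g\sim h$ as $(\lambda_1,\lambda_2)\to(0,0)$ means $g/h\to1$. *)

theory Defs
  imports "HOL-Analysis.Analysis" "HOL-Library.Landau_Symbols"
begin

definition spec_integrand :: "real \<Rightarrow> (real \<Rightarrow> real) \<Rightarrow> real \<times> real \<Rightarrow> real \<Rightarrow> real" where
  "spec_integrand \<alpha> \<Phi> l x =
     \<Phi> x * (1/4 - x) powr \<alpha> / (1 - 2 * x * (cos (fst l) + cos (snd l)))\<^sup>2"

definition spec_dens :: "real \<Rightarrow> real \<Rightarrow> (real \<Rightarrow> real) \<Rightarrow> real \<times> real \<Rightarrow> real" where
  "spec_dens \<sigma>2 \<alpha> \<Phi> l =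
     \<sigma>2 / (4 * pi\<^sup>2) * (LINT x:{0..1/4}|lborel. spec_integrand \<alpha> \<Phi> l x)"

definition sq_box :: "(real \<times> real) set" where
  "sq_box = {-pi..pi} \<times> {-pi..pi}"

end

theory Submission
  imports Defs "HOL-Real_Asymp.Real_Asymp"
begin

(* The density depends on (l1,l2) only through c = cos l1 + cos l2, which ranges over [-2,2]
   and equals 2 exactly at the origin of the box: f(l) = K * G(c(l)) with K = s2/(4 pi^2) and
     G(c) = int_0^{1/4} Phi(x) (1/4-x)^a / (1 - 2xc)^2 dx.
   Since 1 - 2xc >= 4(1/4 - x) for c <= 2, and 1 - 2xc is bounded away from 0 for c < 2,
   dominated convergence gives continuity of G on (-inf,2] when a > 1 and on (-inf,2) always;
   this yields (i) and the continuity part of (ii).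
   Near c = 2 write c = 2 - s.  The comparison integral
     J(s) = int_0^{1/4} (1/4-x)^a / (1 - 4x + s/2)^2 dx
   is computed by the substitution x = 1/4 - s u/8:  J(s) = 16^{-a} (2s)^{a-1} int_0^{2/s} u^a/(1+u)^2 du,
   so J(s) ~ 16^{-a} (2s)^{a-1} int_0^inf u^a/(1+u)^2 du for a < 1 and J(s) ~ |ln s|/16 for a = 1;
   in both cases J(s) -> inf.  Comparing the denominators shows G_1(2-s) ~ J(s) (G_1: Phi = 1), and
   continuity of Phi at 1/4 localises the integral: G(2-s) ~ Phi(1/4) J(s).
   Finally s = 2 - c(l) ~ (l1^2 + l2^2)/2 by elementary cosine bounds, which gives the
   asymptotics in (ii); the Hoelder hypothesis of the case a = 1 is not needed.
   The sections below follow this order: integrability of the weights, the profile G and its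
   continuity, parts (i) and (ii) away from the origin, the kernel u^a/(1+u)^2, the comparison
   integral J, localisation near c = 2, the geometry near the origin, and the asymptotics. *)

lemma set_integrable_lebesgue_to_lborel:
  fixes f :: "real \<Rightarrow> real"
  assumes "set_integrable lebesgue A f" "set_borel_measurable lborel A f"
  shows "set_integrable lborel A f"
  using assms unfolding set_integrable_def set_borel_measurable_def
  by (subst integrable_completion[symmetric]) auto

lemma powr_integrable_from_0:
  assumes "(b::real) > -1" "c \<ge> 0"
  shows "set_integrable lborel {0..c} (\<lambda>x. x powr b)"
proof (rule set_integrable_lebesgue_to_lborel)
  show "set_integrable lebesgue {0..c} (\<lambda>x. x powr b)"
    by (rule nonnegative_absolutely_integrable_1[OF integrable_on_powr_from_0[OF assms]]) auto
  show "set_borel_measurable lborel {0..c} (\<lambda>x. x powr b)"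
    unfolding set_borel_measurable_def by measurable
qed

lemma powr_integrable_to_quarter:
  assumes "(b::real) > -1"
  shows "set_integrable lborel {0..1/4} (\<lambda>x. (1/4 - x) powr b)"
proof -
  have "integrable lborel (\<lambda>x. indicator {0..1/4} x *\<^sub>R x powr b)"
    using powr_integrable_from_0[OF assms, of "1/4"] unfolding set_integrable_def by simp
  from lborel_integrable_real_affine[OF this, of "-1" "1/4"]
  have "integrable lborel (\<lambda>x. indicator {0..1/4} (1/4 + - 1 * x) *\<^sub>R (1/4 + - 1 * x) powr b)"
    by simp
  moreover have "indicator {0..1/4} (1/4 + - 1 * x) = (indicator {0..1/4} x :: real)" for x :: real
    by (auto simp: indicator_def)
  ultimately show ?thesis unfolding set_integrable_def by simp
qed

section \<open>The profile G as a function of c = cos l1 + cos l2\<close>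

definition kern :: "real \<Rightarrow> (real \<Rightarrow> real) \<Rightarrow> real \<Rightarrow> real \<Rightarrow> real" where
  "kern \<alpha> \<Phi> c x = \<Phi> x * (1/4 - x) powr \<alpha> / (1 - 2 * x * c)\<^sup>2"

definition prof :: "real \<Rightarrow> (real \<Rightarrow> real) \<Rightarrow> real \<Rightarrow> real" where
  "prof \<alpha> \<Phi> c = (LINT x:{0..1/4}|lborel. kern \<alpha> \<Phi> c x)"

lemma kern_one: "kern \<alpha> (\<lambda>_. 1) c x = (1/4 - x) powr \<alpha> / (1 - 2 * x * c)\<^sup>2"
  by (simp add: kern_def)

lemma kern_measurable:
  assumes "set_borel_measurable lborel {0..1/4} \<Phi>"
  shows "set_borel_measurable lborel {0..1/4} (kern \<alpha> \<Phi> c)"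
proof -
  have "(\<lambda>x. (1/4 - x) powr \<alpha> / (1 - 2 * x * c)\<^sup>2) \<in> borel_measurable lborel"
    by measurable
  with assms have "(\<lambda>x. (indicator {0..1/4} x *\<^sub>R \<Phi> x) * ((1/4 - x) powr \<alpha> / (1 - 2 * x * c)\<^sup>2))
      \<in> borel_measurable lborel"
    unfolding set_borel_measurable_def by (intro borel_measurable_times)
  then show ?thesis
    unfolding set_borel_measurable_def kern_def by (simp add: indicator_def mult.assoc)
qed

lemma kern_denominator_pos:
  fixes x c :: real
  assumes "0 \<le> x" "x < 1/4" "c \<le> 2"
  shows "1 - 2 * x * c > 0"
proof (cases "c \<ge> 0")
  case True
  have "2 * x * c \<le> 2 * x * 2" using assms True by (intro mult_left_mono) auto
  then show ?thesis using assms by linarith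
next
  case False
  then have "x * c \<le> 0" using assms by (simp add: mult_nonneg_nonpos)
  then show ?thesis by linarith
qed

(* Pointwise continuity of the kernel in c on (-inf,2] (at x = 1/4 the kernel vanishes). *)
lemma kern_tendsto:
  assumes "u \<longlonglongrightarrow> c0" "c0 \<le> 2" "x \<in> {0..1/4}"
  shows "(\<lambda>n. kern \<alpha> \<Phi> (u n) x) \<longlonglongrightarrow> kern \<alpha> \<Phi> c0 x"
proof (cases "x = 1/4")
  case True
  then show ?thesis unfolding True by (simp add: kern_def)
next
  case False
  with assms have "1 - 2 * x * c0 > 0" by (intro kern_denominator_pos) auto
  then show ?thesis unfolding kern_def by (intro tendsto_intros assms(1)) auto
qed

lemma prof_continuous:
  assumes meas: "set_borel_measurable lborel {0..1/4} \<Phi>"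
    and w: "set_integrable lborel {0..1/4} w"
    and bound: "\<And>c x. c \<in> S \<Longrightarrow> x \<in> {0..1/4} \<Longrightarrow> \<bar>kern \<alpha> \<Phi> c x\<bar> \<le> w x"
    and c0: "c0 \<in> S" "c0 \<le> 2"
  shows "continuous (at c0 within S) (prof \<alpha> \<Phi>)"
proof (rule continuous_within_sequentiallyI)
  fix u :: "nat \<Rightarrow> real" assume u: "u \<longlonglongrightarrow> c0" "\<forall>n. u n \<in> S"
  show "(\<lambda>n. prof \<alpha> \<Phi> (u n)) \<longlonglongrightarrow> prof \<alpha> \<Phi> c0"
    unfolding prof_def set_lebesgue_integral_def
  proof (rule integral_dominated_convergence[where w = "\<lambda>x. indicator {0..1/4} x *\<^sub>R w x"])
    show "(\<lambda>x. indicat_real {0..1/4} x *\<^sub>R kern \<alpha> \<Phi> c x) \<in> borel_measurable lborel" for c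
      using kern_measurable[OF meas] unfolding set_borel_measurable_def .
    then show "(\<lambda>x. indicat_real {0..1/4} x *\<^sub>R kern \<alpha> \<Phi> (u i) x) \<in> borel_measurable lborel" for i .
    show "integrable lborel (\<lambda>x. indicat_real {0..1/4} x *\<^sub>R w x)"
      using w unfolding set_integrable_def .
    show "AE x in lborel. (\<lambda>i. indicat_real {0..1/4} x *\<^sub>R kern \<alpha> \<Phi> (u i) x)
            \<longlonglongrightarrow> indicat_real {0..1/4} x *\<^sub>R kern \<alpha> \<Phi> c0 x"
      using kern_tendsto[OF u(1) c0(2)] by (intro AE_I2) (auto simp: indicator_def)
    show "AE x in lborel. norm (indicat_real {0..1/4} x *\<^sub>R kern \<alpha> \<Phi> (u i) x)
            \<le> indicat_real {0..1/4} x *\<^sub>R w x" for i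
      using bound[OF u(2)[rule_format, of i]] by (intro AE_I2) (auto simp: indicator_def)
  qed
qed

lemma kern_integrable:
  assumes meas: "set_borel_measurable lborel {0..1/4} \<Phi>"
    and w: "set_integrable lborel {0..1/4} w"
    and bound: "\<And>x. x \<in> {0..1/4} \<Longrightarrow> \<bar>kern \<alpha> \<Phi> c x\<bar> \<le> w x"
  shows "set_integrable lborel {0..1/4} (kern \<alpha> \<Phi> c)"
  by (rule set_integrable_bound[OF w kern_measurable[OF meas]])
     (auto intro!: AE_I2 intro: order_trans[OF bound])

(* Majorant valid for all c <= 2: since 1 - 2xc >= 4(1/4 - x), the kernel is O((1/4-x)^(a-2)). *)
lemma kern_bound_upto_2:
  assumes B: "\<forall>x\<in>{0..1/4}. \<bar>\<Phi> x\<bar> \<le> B" and c: "c \<le> 2" and x: "x \<in> {0..1/4}"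
  shows "\<bar>kern \<alpha> \<Phi> c x\<bar> \<le> B / 16 * (1/4 - x) powr (\<alpha> - 2)"
proof (cases "x = 1/4")
  case True then show ?thesis unfolding kern_def True by simp
next
  case False
  define t where "t = 1/4 - x"
  have t: "t > 0" using x False by (auto simp: t_def)
  have B0: "B \<ge> 0" using B x by force
  have d: "1 - 2 * x * c \<ge> 4 * t"
  proof -
    have "x * c \<le> x * 2" using x c by (intro mult_left_mono) auto
    then show ?thesis unfolding t_def by (simp add: algebra_simps)
  qed
  have "\<bar>kern \<alpha> \<Phi> c x\<bar> = \<bar>\<Phi> x\<bar> * t powr \<alpha> / (1 - 2 * x * c)\<^sup>2"
    unfolding kern_def t_def by (simp add: abs_mult)
  also have "\<dots> \<le> B * t powr \<alpha> / (4 * t)\<^sup>2"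
    using t d B B0 x by (intro frac_le mult_right_mono power_mono) auto
  also have "\<dots> = B / 16 * (t powr \<alpha> / t powr 2)"
    using t by (simp add: power2_eq_square)
  finally show ?thesis by (simp add: t_def powr_diff)
qed

(* Majorant valid uniformly for c <= c1 < 2: the denominator stays >= min 1 ((2 - c1)/2). *)
lemma kern_bound_below_2:
  assumes B: "\<forall>x\<in>{0..1/4}. \<bar>\<Phi> x\<bar> \<le> B" and c1: "c1 < 2" and c: "c \<le> c1" and x: "x \<in> {0..1/4}"
  shows "\<bar>kern \<alpha> \<Phi> c x\<bar> \<le> B / (min 1 ((2 - c1)/2))\<^sup>2 * (1/4 - x) powr \<alpha>"
proof -
  define m where "m = min 1 ((2 - c1)/2)"
  have m: "m > 0" using c1 by (auto simp: m_def)
  have B0: "B \<ge> 0" using B x by force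
  have d: "1 - 2 * x * c \<ge> m"
  proof (cases "c \<ge> 0")
    case True
    have "x * c \<le> (1/4) * c1" using x c True by (intro mult_mono) auto
    then have "(2 - c1)/2 \<le> 1 - 2 * x * c" by (simp add: field_simps)
    then show ?thesis unfolding m_def min_le_iff_disj by blast
  next
    case False
    then have "x * c \<le> 0" using x by (simp add: mult_nonneg_nonpos)
    then have "1 \<le> 1 - 2 * x * c" by (simp add: algebra_simps)
    then show ?thesis unfolding m_def min_le_iff_disj by blast
  qed
  have "\<bar>kern \<alpha> \<Phi> c x\<bar> = \<bar>\<Phi> x\<bar> * (1/4 - x) powr \<alpha> / (1 - 2 * x * c)\<^sup>2"
    unfolding kern_def by (simp add: abs_mult)
  also have "\<dots> \<le> B * (1/4 - x) powr \<alpha> / m\<^sup>2"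
    using m d B B0 x by (intro frac_le mult_right_mono power_mono) auto
  finally show ?thesis by (simp add: m_def)
qed

lemma kern_integrable_below_2:
  assumes meas: "set_borel_measurable lborel {0..1/4} \<Phi>"
    and B: "\<forall>x\<in>{0..1/4}. \<bar>\<Phi> x\<bar> \<le> B" and a: "\<alpha> > -1" and c: "c < 2"
  shows "set_integrable lborel {0..1/4} (kern \<alpha> \<Phi> c)"
proof (rule kern_integrable[OF meas _ kern_bound_below_2[OF B c order_refl]])
  show "set_integrable lborel {0..1/4} (\<lambda>x. B / (min 1 ((2 - c)/2))\<^sup>2 * (1/4 - x) powr \<alpha>)"
    using powr_integrable_to_quarter[OF a] by (rule set_integrable_mult_right)
qed

definition csum :: "real \<times> real \<Rightarrow> real" where
  "csum l = cos (fst l) + cos (snd l)"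

lemma spec_integrand_kern: "spec_integrand \<alpha> \<Phi> l = kern \<alpha> \<Phi> (csum l)"
  by (auto simp: spec_integrand_def kern_def csum_def fun_eq_iff)

lemma spec_dens_prof: "spec_dens \<sigma>2 \<alpha> \<Phi> = (\<lambda>l. \<sigma>2 / (4 * pi\<^sup>2) * prof \<alpha> \<Phi> (csum l))"
  by (auto simp: spec_dens_def prof_def spec_integrand_kern fun_eq_iff)

lemma csum_le_2: "csum l \<le> 2"
  unfolding csum_def using cos_le_one[of "fst l"] cos_le_one[of "snd l"] by linarith

lemma cos_eq_1_imp_0:
  assumes "\<bar>a\<bar> \<le> pi" "cos a = 1" shows "a = 0"
proof -
  have "cos (2 * (a/2)) = 1 - 2 * sin (a/2) ^ 2" by (rule cos_double_sin)
  then have "sin (a/2) = 0" using assms(2) by simp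
  moreover have "\<bar>a/2\<bar> < pi" using assms(1) pi_gt_zero by linarith
  ultimately show ?thesis using sin_zero_pi_iff by fastforce
qed

lemma csum_lt_2:
  assumes "l \<in> sq_box" "l \<noteq> (0,0)" shows "csum l < 2"
proof (rule ccontr)
  assume "\<not> csum l < 2"
  then have "cos (fst l) = 1" "cos (snd l) = 1"
    unfolding csum_def using cos_le_one[of "fst l"] cos_le_one[of "snd l"] by linarith+
  moreover have "\<bar>fst l\<bar> \<le> pi" "\<bar>snd l\<bar> \<le> pi" using assms(1) by (auto simp: sq_box_def)
  ultimately have "fst l = 0" "snd l = 0" using cos_eq_1_imp_0 by blast+
  then show False using assms(2) by (cases l) auto
qed

lemma csum_continuous: "continuous (at l within S) csum"
  unfolding csum_def by (intro continuous_intros)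

section \<open>Finiteness and continuity\<close>

(* Part (i): for a > 1 the majorant of kern_bound_upto_2 is integrable, uniformly in c <= 2. *)
lemma spec_dens_regular_alpha_gt_1:
  assumes meas: "set_borel_measurable lborel {0..1/4} \<Phi>"
    and B: "\<forall>x\<in>{0..1/4}. \<bar>\<Phi> x\<bar> \<le> B" and a: "\<alpha> > 1"
  shows "set_integrable lborel {0..1/4} (spec_integrand \<alpha> \<Phi> l)"
    and "continuous (at l within S) (spec_dens \<sigma>2 \<alpha> \<Phi>)"
proof -
  have w: "set_integrable lborel {0..1/4} (\<lambda>x. B / 16 * (1/4 - x) powr (\<alpha> - 2))"
    using powr_integrable_to_quarter[of "\<alpha> - 2"] a by (intro set_integrable_mult_right) auto
  show "set_integrable lborel {0..1/4} (spec_integrand \<alpha> \<Phi> l)"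
    unfolding spec_integrand_kern by (rule kern_integrable[OF meas w kern_bound_upto_2[OF B csum_le_2]])
  have "continuous (at (csum l) within {..2}) (prof \<alpha> \<Phi>)"
    by (rule prof_continuous[OF meas w kern_bound_upto_2[OF B]]) (auto simp: csum_le_2)
  then have "continuous (at (csum l) within csum ` S) (prof \<alpha> \<Phi>)"
    by (rule continuous_within_subset) (auto simp: csum_le_2)
  then have "continuous (at l within S) (\<lambda>l. prof \<alpha> \<Phi> (csum l))"
    by (rule continuous_within_compose2[OF csum_continuous])
  then show "continuous (at l within S) (spec_dens \<sigma>2 \<alpha> \<Phi>)"
    unfolding spec_dens_prof by (rule continuous_mult[OF continuous_const])
qed

lemma spec_dens_regular_off_origin:
  assumes meas: "set_borel_measurable lborel {0..1/4} \<Phi>"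
    and B: "\<forall>x\<in>{0..1/4}. \<bar>\<Phi> x\<bar> \<le> B" and a: "\<alpha> > -1" and l: "csum l < 2"
  shows "set_integrable lborel {0..1/4} (spec_integrand \<alpha> \<Phi> l)"
    and "continuous (at l within S) (spec_dens \<sigma>2 \<alpha> \<Phi>)"
proof -
  show "set_integrable lborel {0..1/4} (spec_integrand \<alpha> \<Phi> l)"
    unfolding spec_integrand_kern by (rule kern_integrable_below_2[OF meas B a l])
  define c1 where "c1 = (csum l + 2) / 2"
  have c1: "c1 < 2" "csum l < c1" using l by (auto simp: c1_def)
  have w: "set_integrable lborel {0..1/4} (\<lambda>x. B / (min 1 ((2 - c1)/2))\<^sup>2 * (1/4 - x) powr \<alpha>)"
    using powr_integrable_to_quarter[OF a] by (rule set_integrable_mult_right)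
  have "continuous (at (csum l) within {..<c1}) (prof \<alpha> \<Phi>)"
    by (rule prof_continuous[OF meas w kern_bound_below_2[OF B c1(1)]]) (use c1 in auto)
  moreover have "at (csum l) within {..<c1} = at (csum l)"
    using c1 by (intro at_within_open) auto
  ultimately have "isCont (prof \<alpha> \<Phi>) (csum l)"
    by simp
  then have "continuous (at l within S) (\<lambda>l. prof \<alpha> \<Phi> (csum l))"
    by (rule continuous_within_compose3[OF _ csum_continuous])
  then show "continuous (at l within S) (spec_dens \<sigma>2 \<alpha> \<Phi>)"
    unfolding spec_dens_prof by (rule continuous_mult[OF continuous_const])
qed

section \<open>The kernel u^a/(1+u)^2\<close>

definition bkern :: "real \<Rightarrow> real \<Rightarrow> real" where
  "bkern \<alpha> u = u powr \<alpha> / (1 + u)\<^sup>2"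

definition bpart :: "real \<Rightarrow> real \<Rightarrow> real" where
  "bpart \<alpha> T = (LINT u:{0..T}|lborel. bkern \<alpha> u)"

definition bconst :: "real \<Rightarrow> real" where
  "bconst \<alpha> = (LINT u:{0<..}|lborel. bkern \<alpha> u)"

(* Near 0 the kernel is dominated by u^a, near infinity by u^(a-2). *)
lemma bkern_integrable_0_1:
  assumes "\<alpha> > -1"
  shows "set_integrable lborel {0..1} (bkern \<alpha>)"
proof (rule set_integrable_bound[OF powr_integrable_from_0[OF assms zero_le_one]])
  show "set_borel_measurable lborel {0..1} (bkern \<alpha>)"
    unfolding set_borel_measurable_def bkern_def by measurable
  show "AE x in lborel. x \<in> {0..1} \<longrightarrow> norm (bkern \<alpha> x) \<le> norm (x powr \<alpha>)"
  proof (rule AE_I2, rule impI)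
    fix x :: real assume x: "x \<in> {0..1}"
    have "1 \<le> (1 + x)\<^sup>2" using x by (simp add: power2_eq_square) (smt (verit) mult_le_cancel_left1)
    then have "x powr \<alpha> / (1 + x)\<^sup>2 \<le> x powr \<alpha> / 1"
      by (intro divide_left_mono) auto
    then show "norm (bkern \<alpha> x) \<le> norm (x powr \<alpha>)" using x by (simp add: bkern_def)
  qed
qed

lemma bkern_integrable_1_inf:
  assumes "\<alpha> < 1"
  shows "set_integrable lborel {1..} (bkern \<alpha>)"
proof -
  have "((\<lambda>x. x powr (\<alpha> - 2)) has_integral -(1 powr (\<alpha> - 2 + 1)) / (\<alpha> - 2 + 1)) {1..}"
    by (rule has_integral_powr_to_inf) (use assms in auto)
  then have "set_integrable lebesgue {1..} (\<lambda>x::real. x powr (\<alpha> - 2))"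
    by (intro nonnegative_absolutely_integrable_1) auto
  then have I: "set_integrable lborel {1..} (\<lambda>x::real. x powr (\<alpha> - 2))"
    by (rule set_integrable_lebesgue_to_lborel) (unfold set_borel_measurable_def, measurable)
  show ?thesis
  proof (rule set_integrable_bound[OF I])
    show "set_borel_measurable lborel {1..} (bkern \<alpha>)"
      unfolding set_borel_measurable_def bkern_def by measurable
    show "AE x in lborel. x \<in> {1..} \<longrightarrow> norm (bkern \<alpha> x) \<le> norm (x powr (\<alpha> - 2))"
    proof (rule AE_I2, rule impI)
      fix x :: real assume x: "x \<in> {1..}"
      then have x0: "x > 0" by auto
      have "x\<^sup>2 \<le> (1 + x)\<^sup>2" using x by (intro power_mono) auto
      then have "x powr \<alpha> / (1 + x)\<^sup>2 \<le> x powr \<alpha> / x\<^sup>2"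
        using x0 by (intro divide_left_mono) auto
      also have "x powr \<alpha> / x\<^sup>2 = x powr (\<alpha> - 2)"
        using x0 by (simp add: powr_diff flip: powr_numeral)
      finally show "norm (bkern \<alpha> x) \<le> norm (x powr (\<alpha> - 2))" using x0 by (simp add: bkern_def)
    qed
  qed
qed

lemma bkern_integrable:
  assumes "\<alpha> > -1" "\<alpha> < 1"
  shows "set_integrable lborel {0<..} (bkern \<alpha>)"
proof -
  have "set_integrable lborel ({0..1} \<union> {1..}) (bkern \<alpha>)"
    by (rule set_integrable_Un[OF bkern_integrable_0_1 bkern_integrable_1_inf]) (use assms in auto)
  then show ?thesis by (rule set_integrable_subset) auto
qed

lemma bpart_tendsto:
  assumes "\<alpha> > -1" "\<alpha> < 1"
  shows "(bpart \<alpha> \<longlongrightarrow> bconst \<alpha>) at_top"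
proof -
  have int: "set_integrable lborel {0<..} (bkern \<alpha>)" by (rule bkern_integrable[OF assms])
  let ?w = "\<lambda>u. indicator {0<..} u *\<^sub>R bkern \<alpha> u"
  have "((\<lambda>t. integral\<^sup>L lborel (\<lambda>u. indicator {0..t} u *\<^sub>R bkern \<alpha> u)) \<longlongrightarrow> integral\<^sup>L lborel ?w) at_top"
  proof (rule integral_dominated_convergence_at_top[where w = ?w])
    show "?w \<in> borel_measurable lborel" using int unfolding set_integrable_def by auto
    show "(\<lambda>u. indicator {0..t} u *\<^sub>R bkern \<alpha> u) \<in> borel_measurable lborel" for t :: real
      unfolding bkern_def by measurable
    show "integrable lborel ?w" using int unfolding set_integrable_def by auto
    show "AE x in lborel. ((\<lambda>t. indicator {0..t} x *\<^sub>R bkern \<alpha> x) \<longlongrightarrow> ?w x) at_top"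
    proof (rule AE_I2)
      fix x :: real
      show "((\<lambda>t. indicator {0..t} x *\<^sub>R bkern \<alpha> x) \<longlongrightarrow> ?w x) at_top"
      proof (cases "x > 0")
        case True
        have "eventually (\<lambda>t. indicator {0..t} x *\<^sub>R bkern \<alpha> x = ?w x) at_top"
          using eventually_ge_at_top[of x] by eventually_elim (use True in auto)
        then show ?thesis by (rule tendsto_eventually)
      next
        case False
        then have "(\<lambda>t. indicator {0..t} x *\<^sub>R bkern \<alpha> x) = (\<lambda>t. 0)"
          by (cases "x = 0") (auto simp: bkern_def fun_eq_iff)
        moreover have "?w x = 0" using False by simp
        ultimately show ?thesis by (simp only:) (rule tendsto_const)
      qed
    qed
    show "\<forall>\<^sub>F t in at_top. AE x in lborel. norm (indicator {0..t} x *\<^sub>R bkern \<alpha> x) \<le> ?w x"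
      by (intro always_eventually allI AE_I2) (auto simp: bkern_def indicator_def)
  qed
  then show ?thesis unfolding bpart_def bconst_def set_lebesgue_integral_def .
qed

(* The constant is positive: the kernel is at least 1/18 on [1,2]. *)
lemma bconst_pos:
  assumes "\<alpha> > -1" "\<alpha> < 1"
  shows "bconst \<alpha> > 0"
proof -
  have lower: "1/18 \<le> bkern \<alpha> u" if u: "1 \<le> u" "u \<le> 2" for u
  proof -
    have "u powr (-1) \<le> u powr \<alpha>" using u assms by (intro powr_mono) auto
    moreover have "1/2 \<le> u powr (-1)" using u by (simp add: powr_minus_divide field_simps)
    ultimately have "1/2 \<le> u powr \<alpha>" by linarith
    moreover have "(1 + u)\<^sup>2 \<le> 3\<^sup>2" using u by (intro power_mono) auto
    ultimately have "(1/2) / 9 \<le> u powr \<alpha> / (1 + u)\<^sup>2"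
      using u by (intro frac_le) auto
    then show ?thesis by (simp add: bkern_def)
  qed
  have "(1/18::real) = integral\<^sup>L lborel (\<lambda>u::real. indicator {1..2} u *\<^sub>R (1/18::real))"
    using set_integral_const[where A="{1..2::real}" and M=lborel and c="1/18::real"]
    unfolding set_lebesgue_integral_def by simp
  also have "\<dots> \<le> integral\<^sup>L lborel (\<lambda>u. indicator {0<..} u *\<^sub>R bkern \<alpha> u)"
  proof (rule integral_mono)
    show "integrable lborel (\<lambda>u::real. indicator {1..2} u *\<^sub>R (1/18::real))"
      by (simp add: integrable_real_mult_indicator)
    show "integrable lborel (\<lambda>u. indicator {0<..} u *\<^sub>R bkern \<alpha> u)"
      using bkern_integrable[OF assms] unfolding set_integrable_def .
  qed (use lower in \<open>auto simp: indicator_def bkern_def\<close>)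
  finally show ?thesis unfolding bconst_def set_lebesgue_integral_def by simp
qed

lemma bpart_one:
  assumes "T \<ge> 0"
  shows "bpart 1 T = ln (1 + T) + 1 / (1 + T) - 1"
proof -
  have "bpart 1 T = (LINT u:{0..T}|lborel. u / (1 + u)\<^sup>2)"
    unfolding bpart_def by (rule set_lebesgue_integral_cong) (auto simp: bkern_def)
  also have "\<dots> = integral\<^sup>L lborel (\<lambda>u. indicator {0..T} u *\<^sub>R (u / (1 + u)\<^sup>2))"
    unfolding set_lebesgue_integral_def ..
  also have "\<dots> = (ln (1 + T) + 1 / (1 + T)) - (ln (1 + 0) + 1 / (1 + 0))"
  proof (rule integral_FTC_atLeastAtMost[OF assms])
    fix x :: real assume x: "0 \<le> x" "x \<le> T"
    have "((\<lambda>u. ln (1 + u) + 1 / (1 + u)) has_real_derivative (x / (1 + x)\<^sup>2)) (at x within {0..T})"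
      by (insert x, (rule derivative_eq_intros refl | simp)+) (simp add: divide_simps power2_eq_square)
    then show "((\<lambda>u. ln (1 + u) + 1 / (1 + u)) has_vector_derivative x / (1 + x)\<^sup>2) (at x within {0..T})"
      by (simp add: has_real_derivative_iff_has_vector_derivative)
  next
    show "continuous_on {0..T} (\<lambda>u. u / (1 + u)\<^sup>2)"
      by (intro continuous_intros) auto
  qed
  finally show ?thesis by simp
qed

section \<open>The comparison integral J and its blow-up\<close>

definition J :: "real \<Rightarrow> real \<Rightarrow> real" where
  "J \<alpha> s = (LINT x:{0..1/4}|lborel. (1/4 - x) powr \<alpha> / (1 - 4 * x + s / 2)\<^sup>2)"

lemma scaling_constant:
  fixes s \<alpha> :: real assumes s: "s > 0"
  shows "(s/8) * ((s/8) powr \<alpha> * 4 / s\<^sup>2) = 16 powr (-\<alpha>) * (2 * s) powr (\<alpha> - 1)"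
proof -
  have p8: "(8::real) powr \<alpha> = 2 powr \<alpha> * 2 powr \<alpha> * 2 powr \<alpha>"
    by (simp flip: powr_mult)
  have p16: "(16::real) powr \<alpha> = 2 powr \<alpha> * 2 powr \<alpha> * 2 powr \<alpha> * 2 powr \<alpha>"
    by (simp flip: powr_mult)
  show ?thesis using s
    by (simp add: powr_divide powr_mult powr_minus powr_diff p8 p16 field_simps power2_eq_square)
qed

(* Substituting x = 1/4 - s u / 8 turns J into a partial integral of the kernel u^a/(1+u)^2. *)
lemma J_scaling:
  assumes s: "s > 0"
  shows "J \<alpha> s = 16 powr (-\<alpha>) * (2 * s) powr (\<alpha> - 1) * bpart \<alpha> (2/s)"
proof -
  define h where "h x = (1/4 - x) powr \<alpha> / (1 - 4 * x + s / 2)\<^sup>2" for x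
  define k where "k = (s/8) powr \<alpha> * 4 / s\<^sup>2"
  have subst: "indicator {0..1/4} (1/4 + (- s/8) * u) *\<^sub>R h (1/4 + (- s/8) * u)
      = k * (indicator {0..2/s} u *\<^sub>R bkern \<alpha> u)" for u
  proof -
    have range: "1/4 + (- s/8) * u \<in> {0..1/4} \<longleftrightarrow> u \<in> {0..2/s}"
      using s by (auto simp: field_simps zero_le_mult_iff)
    have "h (1/4 + (- s/8) * u) = k * bkern \<alpha> u" if u: "0 \<le> u"
    proof -
      have "(s/8*u) powr \<alpha> = (s/8) powr \<alpha> * u powr \<alpha>" using s u powr_mult[of "s/8" u \<alpha>] by simp
      moreover have "1 - 4 * (1/4 + (- s/8) * u) + s / 2 = s * (1 + u) / 2" by (simp add: field_simps)
      ultimately show ?thesis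
        using s u by (simp add: h_def k_def bkern_def field_simps power2_eq_square)
    qed
    then show ?thesis using range by (auto simp: indicator_def)
  qed
  have "J \<alpha> s = integral\<^sup>L lborel (\<lambda>x. indicator {0..1/4} x *\<^sub>R h x)"
    unfolding J_def set_lebesgue_integral_def h_def ..
  also have "\<dots> = \<bar>- s/8\<bar> *\<^sub>R integral\<^sup>L lborel
      (\<lambda>u. indicator {0..1/4} (1/4 + (- s/8) * u) *\<^sub>R h (1/4 + (- s/8) * u))"
    by (rule lborel_integral_real_affine) (use s in auto)
  also have "\<dots> = (s/8) * (k * bpart \<alpha> (2/s))"
    unfolding subst bpart_def set_lebesgue_integral_def using s by simp
  also have "\<dots> = 16 powr (-\<alpha>) * (2 * s) powr (\<alpha> - 1) * bpart \<alpha> (2/s)"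
    using scaling_constant[OF s, of \<alpha>] unfolding k_def by (metis mult.assoc)
  finally show ?thesis .
qed

lemma J_one:
  assumes "s > 0"
  shows "J 1 s = 1/16 * (ln (1 + 2/s) + 1 / (1 + 2/s) - 1)"
  using J_scaling[OF assms, of 1] bpart_one[of "2/s"] assms by simp

lemma J_equiv_alpha_lt_1:
  assumes a0: "\<alpha> > -1" and a1: "\<alpha> < 1"
  shows "J \<alpha> \<sim>[at_right 0] (\<lambda>s. 16 powr (-\<alpha>) * bconst \<alpha> * (2 * s) powr (\<alpha> - 1))"
proof (rule asymp_equivI')
  have pos: "bconst \<alpha> > 0" by (rule bconst_pos[OF a0 a1])
  have "filterlim (\<lambda>s::real. 2/s) at_top (at_right 0)" by real_asymp
  then have "((\<lambda>s. bpart \<alpha> (2/s)) \<longlongrightarrow> bconst \<alpha>) (at_right 0)"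
    by (rule filterlim_compose[OF bpart_tendsto[OF a0 a1]])
  then have lim: "((\<lambda>s. bpart \<alpha> (2/s) / bconst \<alpha>) \<longlongrightarrow> bconst \<alpha> / bconst \<alpha>) (at_right 0)"
    using pos by (intro tendsto_divide tendsto_const) auto
  have "eventually (\<lambda>s. bpart \<alpha> (2/s) / bconst \<alpha>
      = J \<alpha> s / (16 powr (-\<alpha>) * bconst \<alpha> * (2 * s) powr (\<alpha> - 1))) (at_right 0)"
    using eventually_at_right_less[of 0] by eventually_elim (use pos in \<open>simp add: J_scaling\<close>)
  with lim show "((\<lambda>s. J \<alpha> s / (16 powr (-\<alpha>) * bconst \<alpha> * (2 * s) powr (\<alpha> - 1))) \<longlongrightarrow> 1) (at_right 0)"
    using pos tendsto_cong by fastforce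
qed

lemma J_at_top:
  assumes a0: "\<alpha> > -1" and a1: "\<alpha> \<le> 1"
  shows "filterlim (J \<alpha>) at_top (at_right 0)"
proof (cases "\<alpha> = 1")
  case True
  have "filterlim (\<lambda>s::real. 1/16 * (ln (1 + 2/s) + 1/(1+2/s) - 1)) at_top (at_right 0)"
    by real_asymp
  moreover have "eventually (\<lambda>s. 1/16 * (ln (1 + 2/s) + 1/(1+2/s) - 1) \<le> J 1 s) (at_right 0)"
    using eventually_at_right_less[of 0] by eventually_elim (simp add: J_one)
  ultimately show ?thesis unfolding True by (rule filterlim_at_top_mono)
next
  case False
  with a1 have a1: "\<alpha> < 1" by simp
  have "filterlim (\<lambda>s::real. (2 * s) powr (\<alpha> - 1)) at_top (at_right 0)" using a1 by real_asymp
  then have "filterlim (\<lambda>s. 16 powr (-\<alpha>) * bconst \<alpha> * (2 * s) powr (\<alpha> - 1)) at_top (at_right 0)"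
    by (intro filterlim_tendsto_pos_mult_at_top[OF tendsto_const]) (use bconst_pos[OF a0 a1] in auto)
  then show ?thesis
    by (rule asymp_equiv_at_top_transfer[OF asymp_equiv_symI[OF J_equiv_alpha_lt_1[OF a0 a1]]])
qed

section \<open>Localisation of the profile near c = 2\<close>

lemma eventually_at_right_0_le_2: "eventually (\<lambda>s::real. 0 < s \<and> s \<le> 2) (at_right 0)"
  using eventually_at_right_real[of 0 2] by (auto elim: eventually_mono)

lemma gap_denominator_bounds:
  fixes x s :: real
  assumes x: "x \<in> {0..1/4}" and s: "0 < s" "s \<le> 2"
  shows "s / 2 \<le> 1 - 2 * x * (2 - s)"
    and "1 - 4 * x \<le> 1 - 2 * x * (2 - s)"
    and "1 - 2 * x * (2 - s) \<le> 1 - 4 * x + s / 2"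
    and "1 - 4 * x + s / 2 \<le> (1 + s/2) * (1 - 2 * x * (2 - s))"
proof -
  have e: "1 - 2 * x * (2 - s) = (1 - 4 * x) * (1 - s/2) + s/2" by (simp add: algebra_simps)
  have "0 \<le> (1 - 4 * x) * (1 - s/2)" using x s by simp
  then show "s / 2 \<le> 1 - 2 * x * (2 - s)" unfolding e by linarith
  have "0 \<le> x * s" using x s by simp
  then show "1 - 4 * x \<le> 1 - 2 * x * (2 - s)" by (simp add: algebra_simps)
  have "0 \<le> (1 - 4 * x) * s" using x s by simp
  then show "1 - 2 * x * (2 - s) \<le> 1 - 4 * x + s / 2" by (simp add: algebra_simps)
  have "0 \<le> x * s * s" using x s by simp
  then show "1 - 4 * x + s / 2 \<le> (1 + s/2) * (1 - 2 * x * (2 - s))"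
    by (simp add: algebra_simps)
qed

lemma J_integrable:
  fixes \<alpha> s :: real
  assumes a: "\<alpha> > -1" and s: "s > 0"
  shows "set_integrable lborel {0..1/4} (\<lambda>x. (1/4 - x) powr \<alpha> / (1 - 4 * x + s / 2)\<^sup>2)"
proof (rule set_integrable_bound)
  show "set_integrable lborel {0..1/4} (\<lambda>x. (4 / s\<^sup>2) * (1/4 - x) powr \<alpha>)"
    using powr_integrable_to_quarter[OF a] by (rule set_integrable_mult_right)
  show "set_borel_measurable lborel {0..1/4} (\<lambda>x. (1/4 - x) powr \<alpha> / (1 - 4 * x + s / 2)\<^sup>2)"
    unfolding set_borel_measurable_def by measurable
  show "AE x in lborel. x \<in> {0..1/4} \<longrightarrow>
      norm ((1/4 - x) powr \<alpha> / (1 - 4 * x + s / 2)\<^sup>2) \<le> norm ((4 / s\<^sup>2) * (1/4 - x) powr \<alpha>)"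
  proof (rule AE_I2, rule impI)
    fix x :: real assume x: "x \<in> {0..1/4}"
    have "(1/4 - x) powr \<alpha> / (1 - 4 * x + s / 2)\<^sup>2 \<le> (1/4 - x) powr \<alpha> / (s/2)\<^sup>2"
      using s x by (intro divide_left_mono power_mono mult_pos_pos) auto
    also have "\<dots> = (4 / s\<^sup>2) * (1/4 - x) powr \<alpha>" by (simp add: power2_eq_square)
    finally show "norm ((1/4 - x) powr \<alpha> / (1 - 4 * x + s / 2)\<^sup>2) \<le> norm ((4 / s\<^sup>2) * (1/4 - x) powr \<alpha>)"
      using s x by simp
  qed
qed

lemma J_le_prof_one:
  assumes a: "\<alpha> > -1" and s: "0 < s" "s \<le> 2"
  shows "J \<alpha> s \<le> prof \<alpha> (\<lambda>_. 1) (2 - s)" and "prof \<alpha> (\<lambda>_. 1) (2 - s) \<le> (1 + s/2)\<^sup>2 * J \<alpha> s"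
proof -
  have I1: "set_integrable lborel {0..1/4} (kern \<alpha> (\<lambda>_. 1) (2 - s))"
    by (rule kern_integrable_below_2[where B = 1]) (use a s in \<open>auto simp: set_borel_measurable_def\<close>)
  note I0 = J_integrable[OF a s(1)]
  show "J \<alpha> s \<le> prof \<alpha> (\<lambda>_. 1) (2 - s)"
    unfolding J_def prof_def
  proof (rule set_integral_mono[OF I0 I1])
    fix x :: real assume x: "x \<in> {0..1/4}"
    show "(1/4 - x) powr \<alpha> / (1 - 4 * x + s / 2)\<^sup>2 \<le> kern \<alpha> (\<lambda>_. 1) (2 - s) x"
      unfolding kern_one using gap_denominator_bounds[OF x s] s
      by (intro divide_left_mono power_mono mult_pos_pos) auto
  qed
  have "prof \<alpha> (\<lambda>_. 1) (2 - s)
      \<le> (LINT x:{0..1/4}|lborel. (1 + s/2)\<^sup>2 * ((1/4 - x) powr \<alpha> / (1 - 4 * x + s / 2)\<^sup>2))"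
    unfolding prof_def
  proof (rule set_integral_mono[OF I1 set_integrable_mult_right[OF I0]])
    fix x :: real assume x: "x \<in> {0..1/4}"
    have "kern \<alpha> (\<lambda>_. 1) (2 - s) x
        = (1 + s/2)\<^sup>2 * ((1/4 - x) powr \<alpha> / ((1 + s/2) * (1 - 2 * x * (2 - s)))\<^sup>2)"
      unfolding kern_one using s by (simp add: power_mult_distrib)
    also have "\<dots> \<le> (1 + s/2)\<^sup>2 * ((1/4 - x) powr \<alpha> / (1 - 4 * x + s / 2)\<^sup>2)"
      using gap_denominator_bounds[OF x s] s x
      by (intro mult_left_mono divide_left_mono power_mono mult_pos_pos) auto
    finally show "kern \<alpha> (\<lambda>_. 1) (2 - s) x \<le> (1 + s/2)\<^sup>2 * ((1/4 - x) powr \<alpha> / (1 - 4 * x + s / 2)\<^sup>2)" .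
  qed
  then show "prof \<alpha> (\<lambda>_. 1) (2 - s) \<le> (1 + s/2)\<^sup>2 * J \<alpha> s"
    unfolding J_def by (simp only: set_integral_mult_right)
qed

lemma prof_one_equiv_J:
  assumes a: "\<alpha> > -1" and lim: "filterlim (J \<alpha>) at_top (at_right 0)"
  shows "(\<lambda>s. prof \<alpha> (\<lambda>_. 1) (2 - s)) \<sim>[at_right 0] J \<alpha>"
proof (rule asymp_equivI')
  have ev: "eventually (\<lambda>s. 0 < s \<and> s \<le> 2 \<and> J \<alpha> s > 0) (at_right 0)"
    using eventually_at_right_0_le_2 filterlim_at_top_dense[THEN iffD1, OF lim, rule_format, of 0]
    by eventually_elim auto
  show "((\<lambda>s. prof \<alpha> (\<lambda>_. 1) (2 - s) / J \<alpha> s) \<longlongrightarrow> 1) (at_right 0)"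
  proof (rule tendsto_sandwich[where f = "\<lambda>_. 1" and h = "\<lambda>s. (1 + s/2)\<^sup>2"])
    show "eventually (\<lambda>s. 1 \<le> prof \<alpha> (\<lambda>_. 1) (2 - s) / J \<alpha> s) (at_right 0)"
      using ev by eventually_elim (use J_le_prof_one[OF a] in auto)
    show "eventually (\<lambda>s. prof \<alpha> (\<lambda>_. 1) (2 - s) / J \<alpha> s \<le> (1 + s/2)\<^sup>2) (at_right 0)"
      using ev by eventually_elim (use J_le_prof_one[OF a] in \<open>auto simp: divide_le_eq\<close>)
    show "((\<lambda>s::real. (1 + s/2)\<^sup>2) \<longlongrightarrow> 1) (at_right 0)" by real_asymp
  qed simp
qed

lemma ratio_to_zero:
  fixes R D :: "'a \<Rightarrow> real"
  assumes D: "filterlim D at_top F"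
    and H: "\<And>e. e > 0 \<Longrightarrow> \<exists>M. eventually (\<lambda>s. \<bar>R s\<bar> \<le> e * D s + M) F"
  shows "((\<lambda>s. R s / D s) \<longlongrightarrow> 0) F"
  unfolding tendsto_iff
proof (intro allI impI)
  fix e :: real assume e: "e > 0"
  obtain M where M: "eventually (\<lambda>s. \<bar>R s\<bar> \<le> e/2 * D s + M) F" using H[of "e/2"] e by auto
  have D2: "eventually (\<lambda>s. max 1 (2 * \<bar>M\<bar> / e) < D s) F"
    using D filterlim_at_top_dense by blast
  show "eventually (\<lambda>s. dist (R s / D s) 0 < e) F"
    using M D2
  proof eventually_elim
    case (elim s)
    have Dp: "D s > 0" using elim(2) by linarith
    have "2 * \<bar>M\<bar> < D s * e" using elim(2) e by (simp add: divide_less_eq)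
    then have "\<bar>R s\<bar> < e * D s" using elim(1) by (simp add: algebra_simps)
    then show ?case using Dp by (simp add: abs_divide divide_less_eq)
  qed
qed

(* Pointwise form of the localisation: where |Phi x - Phi(1/4)| < e we use e, elsewhere
   (1/4 - x >= d) the denominator is >= 4d and the kernel is O((1/4-x)^a). *)
lemma kern_localisation_pointwise:
  assumes B: "\<forall>x\<in>{0..1/4}. \<bar>\<Phi> x\<bar> \<le> B" and d: "d > 0"
    and hd: "\<forall>x\<in>{0..1/4}. 1/4 - x < d \<longrightarrow> \<bar>\<Phi> x - \<Phi> (1/4)\<bar> < e"
    and x: "x \<in> {0..1/4}" and s: "0 < s" "s \<le> 2"
  shows "\<bar>kern \<alpha> \<Phi> (2 - s) x - \<Phi> (1/4) * kern \<alpha> (\<lambda>_. 1) (2 - s) x\<bar>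
    \<le> e * kern \<alpha> (\<lambda>_. 1) (2 - s) x + 2 * B / (16 * d\<^sup>2) * (1/4 - x) powr \<alpha>"
proof -
  let ?k = "kern \<alpha> (\<lambda>_. 1) (2 - s) x"
  have id: "kern \<alpha> \<Phi> (2 - s) x - \<Phi> (1/4) * ?k = (\<Phi> x - \<Phi> (1/4)) * ?k"
    by (simp add: kern_def left_diff_distrib diff_divide_distrib)
  have k0: "?k \<ge> 0" by (simp add: kern_one)
  have B0: "B \<ge> 0" using B x by force
  have e0: "e > 0" using hd[rule_format, of "1/4"] d by simp
  show ?thesis
  proof (cases "1/4 - x < d")
    case True
    then have "\<bar>\<Phi> x - \<Phi> (1/4)\<bar> * ?k \<le> e * ?k"
      using hd x k0 by (intro mult_right_mono) (auto simp: less_imp_le)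
    moreover have "0 \<le> 2 * B / (16 * d\<^sup>2) * (1/4 - x) powr \<alpha>" using B0 by simp
    ultimately show ?thesis unfolding id using k0 by (simp add: abs_mult)
  next
    case False
    have "4 * d \<le> 1 - 2 * x * (2 - s)" using False gap_denominator_bounds(2)[OF x s] by simp
    then have D: "(4 * d)\<^sup>2 \<le> (1 - 2 * x * (2 - s))\<^sup>2" using d by (intro power_mono) auto
    moreover have "0 < (4 * d)\<^sup>2" using d by simp
    ultimately have "?k \<le> (1/4 - x) powr \<alpha> / (4 * d)\<^sup>2"
      unfolding kern_one by (intro divide_left_mono mult_pos_pos) auto
    moreover have "\<bar>\<Phi> x - \<Phi> (1/4)\<bar> \<le> 2 * B" using B x by (smt (verit) atLeastAtMost_iff)
    ultimately have "\<bar>\<Phi> x - \<Phi> (1/4)\<bar> * ?k \<le> (2 * B) * ((1/4 - x) powr \<alpha> / (4 * d)\<^sup>2)"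
      using k0 B0 by (intro mult_mono) auto
    moreover have "0 \<le> e * ?k" using e0 k0 by simp
    ultimately show ?thesis unfolding id using k0 by (simp add: abs_mult power2_eq_square)
  qed
qed

lemma prof_localisation:
  assumes meas: "set_borel_measurable lborel {0..1/4} \<Phi>"
    and B: "\<forall>x\<in>{0..1/4}. \<bar>\<Phi> x\<bar> \<le> B" and a: "\<alpha> > -1"
    and cont: "continuous (at (1/4) within {0..1/4}) \<Phi>" and e: "e > 0"
  shows "\<exists>M. \<forall>s. 0 < s \<longrightarrow> s \<le> 2 \<longrightarrow>
    \<bar>prof \<alpha> \<Phi> (2 - s) - \<Phi> (1/4) * prof \<alpha> (\<lambda>_. 1) (2 - s)\<bar> \<le> e * prof \<alpha> (\<lambda>_. 1) (2 - s) + M"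
proof -
  obtain d where d: "d > 0" and hd: "\<forall>x\<in>{0..1/4}. dist x (1/4) < d \<longrightarrow> dist (\<Phi> x) (\<Phi> (1/4)) < e"
    using cont e unfolding continuous_within_eps_delta by blast
  have hd': "\<forall>x\<in>{0..1/4}. 1/4 - x < d \<longrightarrow> \<bar>\<Phi> x - \<Phi> (1/4)\<bar> < e"
    using hd by (auto simp: dist_real_def)
  define C where "C = 2 * B / (16 * d\<^sup>2)"
  note Ip = powr_integrable_to_quarter[OF a]
  show ?thesis
  proof (intro exI allI impI)
    fix s :: real assume s: "0 < s" "s \<le> 2"
    let ?k = "kern \<alpha> (\<lambda>_. 1) (2 - s)"
    have Ig: "set_integrable lborel {0..1/4} (kern \<alpha> \<Phi> (2 - s))"
      using kern_integrable_below_2[OF meas B a] s by simp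
    have Ik: "set_integrable lborel {0..1/4} ?k"
      by (rule kern_integrable_below_2[where B = 1]) (use a s in \<open>auto simp: set_borel_measurable_def\<close>)
    let ?h = "\<lambda>x. kern \<alpha> \<Phi> (2 - s) x - \<Phi> (1/4) * ?k x"
    let ?g = "\<lambda>x. e * ?k x + C * (1/4 - x) powr \<alpha>"
    have Ih: "set_integrable lborel {0..1/4} ?h"
      using Ig Ik by (intro set_integral_diff(1) set_integrable_mult_right)
    have Ig2: "set_integrable lborel {0..1/4} ?g"
      using Ik Ip by (intro set_integral_add(1) set_integrable_mult_right)
    have "\<bar>LINT x:{0..1/4}|lborel. ?h x\<bar> \<le> (LINT x:{0..1/4}|lborel. \<bar>?h x\<bar>)"
      using set_integral_norm_bound[OF Ih] by simp
    also have "\<dots> \<le> (LINT x:{0..1/4}|lborel. ?g x)"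
      using kern_localisation_pointwise[OF B d hd' _ s] Ih Ig2
      by (intro set_integral_mono) (auto simp: C_def set_integrable_abs)
    finally show "\<bar>prof \<alpha> \<Phi> (2 - s) - \<Phi> (1/4) * prof \<alpha> (\<lambda>_. 1) (2 - s)\<bar>
        \<le> e * prof \<alpha> (\<lambda>_. 1) (2 - s) + C * (LINT x:{0..1/4}|lborel. (1/4 - x) powr \<alpha>)"
      using Ig Ik Ip unfolding prof_def
      by (simp add: set_integral_diff(2) set_integral_add(2) set_integrable_mult_right)
  qed
qed

lemma prof_equiv_J:
  assumes meas: "set_borel_measurable lborel {0..1/4} \<Phi>"
    and B: "\<forall>x\<in>{0..1/4}. \<bar>\<Phi> x\<bar> \<le> B" and a0: "\<alpha> > -1" and a1: "\<alpha> \<le> 1"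
    and cont: "continuous (at (1/4) within {0..1/4}) \<Phi>" and nz: "\<Phi> (1/4) \<noteq> 0"
  shows "(\<lambda>s. prof \<alpha> \<Phi> (2 - s)) \<sim>[at_right 0] (\<lambda>s. \<Phi> (1/4) * J \<alpha> s)"
proof -
  let ?G1 = "\<lambda>s. prof \<alpha> (\<lambda>_. 1) (2 - s)"
  have LJ: "filterlim (J \<alpha>) at_top (at_right 0)" by (rule J_at_top[OF a0 a1])
  have "eventually (\<lambda>s. J \<alpha> s \<le> ?G1 s) (at_right 0)"
    using eventually_at_right_0_le_2 by eventually_elim (use J_le_prof_one[OF a0] in auto)
  then have LG: "filterlim ?G1 at_top (at_right 0)"
    by (rule filterlim_at_top_mono[OF LJ])
  let ?R = "\<lambda>s. prof \<alpha> \<Phi> (2 - s) - \<Phi> (1/4) * ?G1 s"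
  have R0: "((\<lambda>s. ?R s / ?G1 s) \<longlongrightarrow> 0) (at_right 0)"
  proof (rule ratio_to_zero[OF LG])
    fix e :: real assume "e > 0"
    then obtain M where M: "\<forall>s. 0 < s \<longrightarrow> s \<le> 2 \<longrightarrow> \<bar>?R s\<bar> \<le> e * ?G1 s + M"
      using prof_localisation[OF meas B a0 cont] by blast
    have "eventually (\<lambda>s. \<bar>?R s\<bar> \<le> e * ?G1 s + M) (at_right 0)"
      using eventually_at_right_0_le_2 by eventually_elim (use M in auto)
    then show "\<exists>M. eventually (\<lambda>s. \<bar>?R s\<bar> \<le> e * ?G1 s + M) (at_right 0)" by blast
  qed
  have "eventually (\<lambda>s. 1 + (?R s / ?G1 s) / \<Phi> (1/4) = prof \<alpha> \<Phi> (2 - s) / (\<Phi> (1/4) * ?G1 s)) (at_right 0)"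
    using filterlim_at_top_dense[THEN iffD1, OF LG, rule_format, of 0]
    by eventually_elim (use nz in \<open>auto simp: field_simps\<close>)
  moreover have "((\<lambda>s. 1 + (?R s / ?G1 s) / \<Phi> (1/4)) \<longlongrightarrow> 1 + 0 / \<Phi> (1/4)) (at_right 0)"
    by (intro tendsto_intros R0 nz)
  ultimately have "(\<lambda>s. prof \<alpha> \<Phi> (2 - s)) \<sim>[at_right 0] (\<lambda>s. \<Phi> (1/4) * ?G1 s)"
    by (intro asymp_equivI') (simp add: tendsto_cong)
  also have "(\<lambda>s. \<Phi> (1/4) * ?G1 s) \<sim>[at_right 0] (\<lambda>s. \<Phi> (1/4) * J \<alpha> s)"
    by (rule asymp_equiv_mult[OF asymp_equiv_refl prof_one_equiv_J[OF a0 LJ]])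
  finally show ?thesis .
qed

section \<open>Geometry near the origin: 2 - c ~ (l1^2 + l2^2)/2\<close>

lemma one_minus_cos_le: "1 - cos (a::real) \<le> a\<^sup>2 / 2"
proof -
  have "cos (2 * (a/2)) = 1 - 2 * sin (a/2) ^ 2" by (rule cos_double_sin)
  then have e: "1 - cos a = 2 * (sin (a/2))\<^sup>2" by simp
  have "\<bar>sin (a/2)\<bar> \<le> \<bar>a/2\<bar>" by (rule abs_sin_x_le_abs_x)
  then have "(sin (a/2))\<^sup>2 \<le> (a/2)\<^sup>2"
    by (metis abs_ge_zero power2_abs power_mono)
  then show ?thesis unfolding e by (simp add: power2_eq_square)
qed

lemma cos_le_taylor4:
  assumes "(a::real) > 0" shows "cos a \<le> 1 - a\<^sup>2/2 + a^4/24"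
proof -
  obtain t where t: "cos a = (\<Sum>m<4. cos_coeff m * a ^ m) + (cos (t + 1/2 * real 4 * pi) / fact 4) * a ^ 4"
    using Maclaurin_cos_expansion2[OF assms, of 4] by auto
  have "(\<Sum>m<4. cos_coeff m * a ^ m)
      = cos_coeff 0 * a^0 + cos_coeff 1 * a^1 + cos_coeff 2 * a^2 + cos_coeff 3 * a^3"
    by (simp add: eval_nat_numeral)
  also have "\<dots> = 1 - a\<^sup>2/2"
    by (simp add: cos_coeff_def)
  moreover have "cos (t + 1/2 * real 4 * pi) * a ^ 4 \<le> 1 * a ^ 4"
    by (intro mult_right_mono) auto
  ultimately show ?thesis using t by (simp add: fact_numeral)
qed

lemma one_minus_cos_ge: "(a::real)\<^sup>2 / 2 - a^4/24 \<le> 1 - cos a"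
proof (cases "a = 0")
  case False
  have "cos \<bar>a\<bar> \<le> 1 - \<bar>a\<bar>\<^sup>2/2 + \<bar>a\<bar>^4/24" using False by (intro cos_le_taylor4) auto
  then show ?thesis by simp
qed simp

definition gap :: "real \<times> real \<Rightarrow> real" where "gap l = 2 - csum l"
definition rad2 :: "real \<times> real \<Rightarrow> real" where "rad2 l = (fst l)\<^sup>2 + (snd l)\<^sup>2"

abbreviation at_origin :: "(real \<times> real) filter" where
  "at_origin \<equiv> at (0, 0) within sq_box"

lemma gap_upper: "gap l \<le> rad2 l / 2"
  unfolding gap_def rad2_def csum_def using one_minus_cos_le[of "fst l"] one_minus_cos_le[of "snd l"]
  by simp

lemma gap_lower: "rad2 l / 2 - (rad2 l)\<^sup>2 / 24 \<le> gap l"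
proof -
  have "0 \<le> (fst l * snd l) * (fst l * snd l)" by simp
  then have "(fst l)^4 + (snd l)^4 \<le> (rad2 l)\<^sup>2"
    unfolding rad2_def by (simp add: power2_eq_square eval_nat_numeral algebra_simps)
  then show ?thesis
    unfolding gap_def rad2_def csum_def using one_minus_cos_ge[of "fst l"] one_minus_cos_ge[of "snd l"]
    by (simp add: field_simps)
qed

lemma rad2_tendsto: "(rad2 \<longlongrightarrow> 0) at_origin"
proof -
  have "((\<lambda>l. (fst l)\<^sup>2 + (snd l)\<^sup>2) \<longlongrightarrow> (fst (0::real,0::real))\<^sup>2 + (snd (0::real,0::real))\<^sup>2) at_origin"
    by (intro tendsto_intros)
  then show ?thesis unfolding rad2_def by simp
qed

lemma eventually_rad2_small: "eventually (\<lambda>l. 0 < rad2 l \<and> rad2 l < 1) at_origin"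
proof -
  have "eventually (\<lambda>l. rad2 l < 1) at_origin"
    using rad2_tendsto by (rule order_tendstoD) simp
  moreover have "eventually (\<lambda>l. l \<noteq> (0,0)) at_origin"
    by (simp add: eventually_at_filter)
  ultimately show ?thesis
    by eventually_elim (auto simp: rad2_def sum_power2_gt_zero_iff prod_eq_iff)
qed

lemma rad2_at_right: "filterlim rad2 (at_right 0) at_origin"
proof -
  have "eventually (\<lambda>l. rad2 l \<in> {0<..} \<and> rad2 l \<noteq> 0) at_origin"
    using eventually_rad2_small by eventually_elim auto
  then show ?thesis unfolding filterlim_at using rad2_tendsto by auto
qed

lemma gap_pos:
  assumes "0 < rad2 l" "rad2 l < 1" shows "0 < gap l"
proof -
  have "(rad2 l)\<^sup>2 \<le> rad2 l" using assms by (simp add: power2_eq_square mult_le_cancel_left1)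
  then show ?thesis using gap_lower[of l] assms by linarith
qed

lemma eventually_gap_pos: "eventually (\<lambda>l. 0 < gap l) at_origin"
  using eventually_rad2_small by eventually_elim (auto intro: gap_pos)

lemma gap_at_right: "filterlim gap (at_right 0) at_origin"
proof -
  have "((\<lambda>l. 2 - (cos (fst l) + cos (snd l))) \<longlongrightarrow>
      2 - (cos (fst (0::real,0::real)) + cos (snd (0::real,0::real)))) at_origin"
    by (intro tendsto_intros)
  then have "(gap \<longlongrightarrow> 0) at_origin" unfolding gap_def csum_def by simp
  moreover have "eventually (\<lambda>l. gap l \<in> {0<..} \<and> gap l \<noteq> 0) at_origin"
    using eventually_gap_pos by eventually_elim auto
  ultimately show ?thesis unfolding filterlim_at by auto
qed

lemma twice_gap_equiv_rad2: "(\<lambda>l. 2 * gap l) \<sim>[at_origin] rad2"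
proof (rule asymp_equivI')
  show "((\<lambda>l. 2 * gap l / rad2 l) \<longlongrightarrow> 1) at_origin"
  proof (rule tendsto_sandwich[where f = "\<lambda>l. 1 - rad2 l / 12" and h = "\<lambda>_. 1"])
    show "eventually (\<lambda>l. 1 - rad2 l / 12 \<le> 2 * gap l / rad2 l) at_origin"
      using eventually_rad2_small
    proof eventually_elim
      case (elim l)
      have "(1 - rad2 l / 12) * rad2 l \<le> 2 * gap l"
        using gap_lower[of l] by (simp add: power2_eq_square field_simps)
      then show ?case using elim by (simp add: le_divide_eq)
    qed
    show "eventually (\<lambda>l. 2 * gap l / rad2 l \<le> 1) at_origin"
      using eventually_rad2_small
      by eventually_elim (use gap_upper in \<open>simp add: divide_le_eq mult.commute\<close>)
    show "((\<lambda>l. 1 - rad2 l / 12) \<longlongrightarrow> 1) at_origin"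
      using tendsto_diff[OF tendsto_const tendsto_divide[OF rad2_tendsto tendsto_const]] by simp
  qed simp
qed

lemma spec_dens_equiv_J:
  assumes meas: "set_borel_measurable lborel {0..1/4} \<Phi>"
    and B: "\<forall>x\<in>{0..1/4}. \<bar>\<Phi> x\<bar> \<le> B" and a0: "\<alpha> > -1" and a1: "\<alpha> \<le> 1"
    and cont: "continuous (at (1/4) within {0..1/4}) \<Phi>" and nz: "\<Phi> (1/4) \<noteq> 0"
  shows "spec_dens \<sigma>2 \<alpha> \<Phi> \<sim>[at_origin] (\<lambda>l. \<sigma>2 / (4 * pi\<^sup>2) * (\<Phi> (1/4) * J \<alpha> (gap l)))"
  unfolding spec_dens_prof
  using asymp_equiv_compose'[OF prof_equiv_J[OF assms] gap_at_right]
  by (intro asymp_equiv_mult[OF asymp_equiv_refl]) (simp add: gap_def)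

lemma spec_dens_asymp_alpha_lt_1:
  assumes meas: "set_borel_measurable lborel {0..1/4} \<Phi>"
    and B: "\<forall>x\<in>{0..1/4}. \<bar>\<Phi> x\<bar> \<le> B" and a0: "\<alpha> > -1" and a1: "\<alpha> < 1"
    and cont: "continuous (at (1/4) within {0..1/4}) \<Phi>" and nz: "\<Phi> (1/4) \<noteq> 0"
  shows "spec_dens \<sigma>2 \<alpha> \<Phi> \<sim>[at_origin]
         (\<lambda>l. (\<sigma>2 / (4 * pi\<^sup>2) * 16 powr (-\<alpha>) * \<Phi> (1/4) *
                 (LINT u:{0<..}|lborel. u powr \<alpha> / (1 + u)\<^sup>2))
               * ((fst l)\<^sup>2 + (snd l)\<^sup>2) powr (\<alpha> - 1))"
proof -
  have J_gap: "(\<lambda>l. J \<alpha> (gap l)) \<sim>[at_origin] (\<lambda>l. 16 powr (-\<alpha>) * bconst \<alpha> * (2 * gap l) powr (\<alpha> - 1))"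
    by (rule asymp_equiv_compose'[OF J_equiv_alpha_lt_1[OF a0 a1] gap_at_right])
  have pow: "(\<lambda>l. (2 * gap l) powr (\<alpha> - 1)) \<sim>[at_origin] (\<lambda>l. rad2 l powr (\<alpha> - 1))"
    using eventually_gap_pos
    by (intro asymp_equiv_powr_real[OF twice_gap_equiv_rad2]) (auto elim: eventually_mono simp: rad2_def)
  have "spec_dens \<sigma>2 \<alpha> \<Phi> \<sim>[at_origin] (\<lambda>l. \<sigma>2 / (4 * pi\<^sup>2) * (\<Phi> (1/4) * J \<alpha> (gap l)))"
    by (rule spec_dens_equiv_J[OF meas B a0 _ cont nz]) (use a1 in simp)
  also have "\<dots> \<sim>[at_origin] (\<lambda>l. \<sigma>2 / (4 * pi\<^sup>2) * (\<Phi> (1/4) *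
      (16 powr (-\<alpha>) * bconst \<alpha> * rad2 l powr (\<alpha> - 1))))"
    by (intro asymp_equiv_mult[OF asymp_equiv_refl] asymp_equiv_trans[OF J_gap]
        asymp_equiv_refl pow)
  finally show ?thesis
    by (simp add: bconst_def bkern_def rad2_def mult_ac)
qed

lemma log_term_equiv:
  "(\<lambda>l. ln (1 + 2 / gap l) + 1 / (1 + 2 / gap l) - 1) \<sim>[at_origin] (\<lambda>l. \<bar>ln (rad2 l)\<bar>)"
proof (rule asymp_equivI')
  (* The left side equals -ln(rad2 l) + E(l) with E bounded (E -> 2 ln 2 - 1), and -ln rad2 -> inf. *)
  let ?E = "\<lambda>l. ln (gap l + 2) - ln (2 * gap l / rad2 l) + ln 2 + gap l / (gap l + 2) - 1"
  have g0: "(gap \<longlongrightarrow> 0) at_origin" using gap_at_right unfolding filterlim_at by blast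
  have gr: "((\<lambda>l. 2 * gap l / rad2 l) \<longlongrightarrow> 1) at_origin"
    by (rule asymp_equivD_strong[OF twice_gap_equiv_rad2])
       (use eventually_rad2_small in \<open>auto elim: eventually_mono\<close>)
  have E: "(?E \<longlongrightarrow> ln (0 + 2) - ln 1 + ln 2 + 0 / (0 + 2) - 1) at_origin"
    by (intro tendsto_intros g0 gr) auto
  have "filterlim (\<lambda>l. ln (rad2 l)) at_bot at_origin"
    by (rule filterlim_compose[OF ln_at_0 rad2_at_right])
  then have "((\<lambda>l. inverse (- ln (rad2 l))) \<longlongrightarrow> 0) at_origin"
    by (intro tendsto_inverse_0_at_top) (simp add: filterlim_uminus_at_top)
  then have T: "((\<lambda>l. 1 + ?E l * inverse (- ln (rad2 l))) \<longlongrightarrow> 1) at_origin"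
    using tendsto_add[OF tendsto_const tendsto_mult[OF E]] by fastforce
  have "eventually (\<lambda>l. 1 + ?E l * inverse (- ln (rad2 l)) =
      (ln (1 + 2 / gap l) + 1 / (1 + 2 / gap l) - 1) / \<bar>ln (rad2 l)\<bar>) at_origin"
    using eventually_rad2_small
  proof eventually_elim
    case (elim l)
    have s: "gap l > 0" using elim by (intro gap_pos) auto
    have lr: "ln (rad2 l) < 0" using elim by simp
    have a: "ln (1 + 2 / gap l) = ln (gap l + 2) - ln (gap l)"
    proof -
      have "1 + 2 / gap l = (gap l + 2) / gap l" using s by (simp add: field_simps)
      then show ?thesis using s by (simp add: ln_div)
    qed
    have b: "1 / (1 + 2 / gap l) = gap l / (gap l + 2)"
      using s by (simp add: field_simps)
    have c: "ln (2 * gap l / rad2 l) = ln 2 + ln (gap l) - ln (rad2 l)"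
      using s elim by (simp add: ln_div ln_mult)
    show ?case unfolding a b c using lr by (simp add: field_simps)
  qed
  with T show "((\<lambda>l. (ln (1 + 2 / gap l) + 1 / (1 + 2 / gap l) - 1) / \<bar>ln (rad2 l)\<bar>) \<longlongrightarrow> 1) at_origin"
    using tendsto_cong by fastforce
qed

lemma spec_dens_asymp_alpha_1:
  assumes meas: "set_borel_measurable lborel {0..1/4} \<Phi>"
    and B: "\<forall>x\<in>{0..1/4}. \<bar>\<Phi> x\<bar> \<le> B"
    and cont: "continuous (at (1/4) within {0..1/4}) \<Phi>" and nz: "\<Phi> (1/4) \<noteq> 0"
  shows "spec_dens \<sigma>2 1 \<Phi> \<sim>[at_origin]
         (\<lambda>l. (\<sigma>2 / (4 * pi\<^sup>2) * 16 powr (-1) * \<Phi> (1/4))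
               * \<bar>ln ((fst l)\<^sup>2 + (snd l)\<^sup>2)\<bar>)"
proof -
  have "eventually (\<lambda>l. J 1 (gap l) = 1/16 * (ln (1 + 2 / gap l) + 1 / (1 + 2 / gap l) - 1)) at_origin"
    using eventually_gap_pos by eventually_elim (simp add: J_one)
  then have "(\<lambda>l. J 1 (gap l)) \<sim>[at_origin] (\<lambda>l. 1/16 * (ln (1 + 2 / gap l) + 1 / (1 + 2 / gap l) - 1))"
    by (rule asymp_equiv_refl_ev)
  also have "\<dots> \<sim>[at_origin] (\<lambda>l. 1/16 * \<bar>ln (rad2 l)\<bar>)"
    by (rule asymp_equiv_mult[OF asymp_equiv_refl log_term_equiv])
  finally have J_gap: "(\<lambda>l. J 1 (gap l)) \<sim>[at_origin] (\<lambda>l. 1/16 * \<bar>ln (rad2 l)\<bar>)" .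
  have "spec_dens \<sigma>2 1 \<Phi> \<sim>[at_origin] (\<lambda>l. \<sigma>2 / (4 * pi\<^sup>2) * (\<Phi> (1/4) * J 1 (gap l)))"
    by (rule spec_dens_equiv_J[OF meas B _ _ cont nz]) auto
  also have "\<dots> \<sim>[at_origin] (\<lambda>l. \<sigma>2 / (4 * pi\<^sup>2) * (\<Phi> (1/4) * (1/16 * \<bar>ln (rad2 l)\<bar>)))"
    by (intro asymp_equiv_mult[OF asymp_equiv_refl] J_gap asymp_equiv_refl)
  finally show ?thesis
    by (simp add: rad2_def powr_minus_divide mult_ac)
qed

lemma spec_dens_diverges:
  assumes meas: "set_borel_measurable lborel {0..1/4} \<Phi>"
    and B: "\<forall>x\<in>{0..1/4}. \<bar>\<Phi> x\<bar> \<le> B" and a0: "\<alpha> > -1" and a1: "\<alpha> \<le> 1"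
    and cont: "continuous (at (1/4) within {0..1/4}) \<Phi>" and nz: "\<Phi> (1/4) \<noteq> 0"
    and sigma: "\<sigma>2 > 0"
  shows "filterlim (\<lambda>l. sgn (\<Phi> (1/4)) * spec_dens \<sigma>2 \<alpha> \<Phi> l) at_top at_origin"
proof -
  define K where "K = \<sigma>2 / (4 * pi\<^sup>2)"
  have K: "K * \<bar>\<Phi> (1/4)\<bar> > 0" using sigma nz by (simp add: K_def)
  have "(\<lambda>l. sgn (\<Phi> (1/4)) * spec_dens \<sigma>2 \<alpha> \<Phi> l) \<sim>[at_origin]
      (\<lambda>l. sgn (\<Phi> (1/4)) * (K * (\<Phi> (1/4) * J \<alpha> (gap l))))"
    unfolding K_def by (intro asymp_equiv_mult[OF asymp_equiv_refl] spec_dens_equiv_J[OF assms(1-6)])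
  moreover have "sgn (\<Phi> (1/4)) * (K * (\<Phi> (1/4) * y)) = (K * \<bar>\<Phi> (1/4)\<bar>) * y" for y
    by (simp add: sgn_real_def)
  ultimately have equiv: "(\<lambda>l. sgn (\<Phi> (1/4)) * spec_dens \<sigma>2 \<alpha> \<Phi> l) \<sim>[at_origin]
      (\<lambda>l. (K * \<bar>\<Phi> (1/4)\<bar>) * J \<alpha> (gap l))"
    by simp
  have "filterlim (\<lambda>l. J \<alpha> (gap l)) at_top at_origin"
    by (rule filterlim_compose[OF J_at_top[OF a0 a1] gap_at_right])
  then have "filterlim (\<lambda>l. (K * \<bar>\<Phi> (1/4)\<bar>) * J \<alpha> (gap l)) at_top at_origin"
    by (intro filterlim_tendsto_pos_mult_at_top[OF tendsto_const K])
  then show ?thesis by (rule asymp_equiv_at_top_transfer[OF asymp_equiv_symI[OF equiv]])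
qed

theorem lemma1:
  fixes \<alpha> \<sigma>2 :: real and \<Phi> :: "real \<Rightarrow> real"
  assumes alpha: "\<alpha> > -1"
    and meas: "set_borel_measurable lborel {0..1/4} \<Phi>"
    and bdd: "\<exists>B. \<forall>x\<in>{0..1/4}. \<bar>\<Phi> x\<bar> \<le> B"
    and cont: "continuous (at (1/4) within {0..1/4}) \<Phi>"
    and nz: "\<Phi> (1/4) \<noteq> 0"
    and sigma: "\<sigma>2 > 0"
  shows
    "(\<alpha> > 1 \<longrightarrow>
       (\<forall>l\<in>sq_box. set_integrable lborel {0..1/4} (spec_integrand \<alpha> \<Phi> l) \<and>
          continuous (at l within sq_box) (spec_dens \<sigma>2 \<alpha> \<Phi>)))
   \<and> (\<alpha> \<le> 1 \<longrightarrow>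
       (\<forall>l\<in>sq_box - {(0,0)}. set_integrable lborel {0..1/4} (spec_integrand \<alpha> \<Phi> l) \<and>
          continuous (at l within sq_box) (spec_dens \<sigma>2 \<alpha> \<Phi>))
     \<and> filterlim (\<lambda>l. sgn (\<Phi> (1/4)) * spec_dens \<sigma>2 \<alpha> \<Phi> l) at_top (at (0,0) within sq_box))
   \<and> (\<alpha> < 1 \<longrightarrow>
       spec_dens \<sigma>2 \<alpha> \<Phi> \<sim>[at (0,0) within sq_box]
         (\<lambda>l. (\<sigma>2 / (4 * pi\<^sup>2) * 16 powr (-\<alpha>) * \<Phi> (1/4) *
                 (LINT u:{0<..}|lborel. u powr \<alpha> / (1 + u)\<^sup>2))
               * ((fst l)\<^sup>2 + (snd l)\<^sup>2) powr (\<alpha> - 1)))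
   \<and> (\<alpha> = 1 \<and> (\<exists>\<beta>>0. \<exists>C>0. \<forall>x\<in>{0..1/4}. \<forall>y\<in>{0..1/4}. \<bar>\<Phi> x - \<Phi> y\<bar> \<le> C * \<bar>x - y\<bar> powr \<beta>)
      \<longrightarrow> spec_dens \<sigma>2 \<alpha> \<Phi> \<sim>[at (0,0) within sq_box]
         (\<lambda>l. (\<sigma>2 / (4 * pi\<^sup>2) * 16 powr (-1) * \<Phi> (1/4))
               * \<bar>ln ((fst l)\<^sup>2 + (snd l)\<^sup>2)\<bar>))"
proof -
  obtain B where B: "\<forall>x\<in>{0..1/4}. \<bar>\<Phi> x\<bar> \<le> B" using bdd by blast
  show ?thesis
    using spec_dens_regular_alpha_gt_1[OF meas B] spec_dens_regular_off_origin[OF meas B alpha csum_lt_2]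
      spec_dens_diverges[OF meas B alpha _ cont nz sigma]
      spec_dens_asymp_alpha_lt_1[OF meas B alpha _ cont nz]
      spec_dens_asymp_alpha_1[OF meas B cont nz]
    by blast
qed

end
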